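(* Let $E\in M_n(\mathbb{FT})$ be idempotent. Then there is an idempotent $E'\in M_n(\mathbb{FT})$ such that $E\,\mathcal{D}\,E'$ and all diagonal entries of $E'$ are equal to $0$.
   Context: $\mathbb{FT}$ is $\mathbb{R}$ with $a\oplus b=\max(a,b)$, $a\otimes b=a+b$; $M_n(\mathbb{FT})$ is the semigroup of real $n\times n$ matrices under $(A\otimes B)_{i,j}=\max_k(A_{i,k}+B_{k,j})$. Green's relations on a semigroup $S$ ($S^1$ is $S$ with an identity adjoined if it has none): $a\,\mathcal{R}\,b$ iff $aS^1=bS^1$, $a\,\mathcal{L}\,b$ iff $S^1a=S^1b$, and $a\,\mathcal{D}\,b$ iff there is $c\in S$ with $a\,\mathcal{R}\,c$ and $c\,\mathcal{L}\,b$. *)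

theory Defs
  imports Complex_Main
begin

text \<open>Tropical (max-plus) n x n matrices over the reals, with the index set a finite type 'n
  (n = CARD('n) >= 1 arbitrary).\<close>

type_synonym 'n tmat = "'n \<Rightarrow> 'n \<Rightarrow> real"

definition tmult :: "('n::finite) tmat \<Rightarrow> 'n tmat \<Rightarrow> 'n tmat" where
  "tmult A B = (\<lambda>i j. Max (range (\<lambda>k. A i k + B k j)))"

definition tidempotent :: "('n::finite) tmat \<Rightarrow> bool" where
  "tidempotent E \<longleftrightarrow> tmult E E = E"

text \<open>Principal one-sided ideals in S^1: A S^1 = {A} \<union> A S, S^1 A = {A} \<union> S A.\<close>

definition right_ideal1 :: "('n::finite) tmat \<Rightarrow> 'n tmat set" where
  "right_ideal1 A = insert A (range (\<lambda>X. tmult A X))"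

definition left_ideal1 :: "('n::finite) tmat \<Rightarrow> 'n tmat set" where
  "left_ideal1 A = insert A (range (\<lambda>X. tmult X A))"

definition green_R :: "('n::finite) tmat \<Rightarrow> 'n tmat \<Rightarrow> bool" where
  "green_R A B \<longleftrightarrow> right_ideal1 A = right_ideal1 B"

definition green_L :: "('n::finite) tmat \<Rightarrow> 'n tmat \<Rightarrow> bool" where
  "green_L A B \<longleftrightarrow> left_ideal1 A = left_ideal1 B"

definition green_D :: "('n::finite) tmat \<Rightarrow> 'n tmat \<Rightarrow> bool" where
  "green_D A B \<longleftrightarrow> (\<exists>C. green_R A C \<and> green_L C B)"

end

theory Submission
  imports Defs
begin

text \<open>Since E is idempotent, E i j = max_k (E i k + E k j), so every entry is attained along a
  path of arbitrary length, and every path has weight at most E i j. Following maximising steps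
  towards a fixed column j from row i must revisit some index v; the resulting cycle through v
  has weight E v v = 0, so E i j = E i v + E v j for some v with zero diagonal entry. Hence if f
  retracts the index set onto the zero-diagonal indices, E factors as the product of its
  column-reindexing C = E(-, f -) and its row-reindexing, which makes E R-related to C, and C is
  L-related to the idempotent E' = E(f -, f -), whose diagonal vanishes.\<close>

lemma tmult_ge: "A i k + B k j \<le> tmult A B i j"
  unfolding tmult_def by (rule Max_ge) auto

lemma tmult_attained: "\<exists>k. tmult A B i j = A i k + B k j"
proof -
  have "tmult A B i j \<in> range (\<lambda>k. A i k + B k j)"
    unfolding tmult_def by (rule Max_in) auto
  then show ?thesis by auto
qed

lemma tmult_eqI:
  assumes "\<And>k. A i k + B k j \<le> c" and "A i l + B l j = c"
  shows "tmult A B i j = c"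
  using tmult_attained[of A B i j] tmult_ge[of A i l B j] assms by (metis order.antisym)

lemma tmult_assoc: "tmult (tmult A B) C = tmult A (tmult B C)"
proof (intro ext order.antisym)
  fix i j
  obtain k l where "tmult (tmult A B) C i j = A i l + B l k + C k j"
    using tmult_attained[of "tmult A B" C i j] tmult_attained[of A B i k for k]
    by (metis add.assoc)
  then show "tmult (tmult A B) C i j \<le> tmult A (tmult B C) i j"
    using tmult_ge[of B l k C j] tmult_ge[of A i l "tmult B C" j] by simp
  obtain k l where "tmult A (tmult B C) i j = A i k + B k l + C l j"
    using tmult_attained[of A "tmult B C" i j] tmult_attained[of B C k j for k]
    by (metis add.assoc)
  then show "tmult A (tmult B C) i j \<le> tmult (tmult A B) C i j"
    using tmult_ge[of A i k B l] tmult_ge[of "tmult A B" i l C j] by simp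
qed

lemma tmult_reindex_right: "tmult A (\<lambda>k j. B k (g j)) = (\<lambda>i j. tmult A B i (g j))"
  unfolding tmult_def by simp

lemma tmult_reindex_left: "tmult (\<lambda>i k. A (g i) k) B = (\<lambda>i j. tmult A B (g i) j)"
  unfolding tmult_def by simp

lemma right_ideal1_subset:
  assumes "A = tmult B X"
  shows "right_ideal1 A \<subseteq> right_ideal1 B"
proof
  fix Z assume "Z \<in> right_ideal1 A"
  then have "Z = tmult B X \<or> (\<exists>W. Z = tmult (tmult B X) W)"
    unfolding right_ideal1_def assms by blast
  then show "Z \<in> right_ideal1 B"
    unfolding right_ideal1_def tmult_assoc by blast
qed

lemma left_ideal1_subset:
  assumes "A = tmult X B"
  shows "left_ideal1 A \<subseteq> left_ideal1 B"
proof
  fix Z assume "Z \<in> left_ideal1 A"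
  then have "Z = tmult X B \<or> (\<exists>W. Z = tmult W (tmult X B))"
    unfolding left_ideal1_def assms by blast
  then show "Z \<in> left_ideal1 B"
    unfolding left_ideal1_def tmult_assoc[symmetric] by blast
qed

lemma green_RI: "A = tmult B X \<Longrightarrow> B = tmult A Y \<Longrightarrow> green_R A B"
  unfolding green_R_def by (intro equalityI right_ideal1_subset)

lemma green_LI: "A = tmult X B \<Longrightarrow> B = tmult Y A \<Longrightarrow> green_L A B"
  unfolding green_L_def by (intro equalityI left_ideal1_subset)

lemma nat_map_to_finite_repeats:
  fixes w :: "nat \<Rightarrow> 'a::finite"
  shows "\<exists>s t. s < t \<and> w s = w t"
proof -
  have "\<not> inj w"
    using finite_imageD[of w UNIV] infinite_UNIV_nat by auto
  then obtain s t where "w s = w t" "s \<noteq> t" unfolding inj_def by blast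
  then show ?thesis by (metis linorder_neq_iff)
qed

context
  fixes E :: "('n::finite) tmat"
  assumes idem: "tidempotent E"
begin

lemma tidempotent_path_le: "E i k + E k j \<le> E i j"
  using tmult_ge[of E i k E j] idem unfolding tidempotent_def by simp

lemma tidempotent_path_attained: "\<exists>k. E i j = E i k + E k j"
  using tmult_attained[of E E i j] idem unfolding tidempotent_def by simp

lemma tidempotent_iterate_path:
  assumes step: "\<And>w. E w j = E w (nx w) + E (nx w) j"
  shows "E i j = E i ((nx ^^ Suc d) i) + E ((nx ^^ Suc d) i) j"
proof (induction d arbitrary: i)
  case 0
  show ?case using step[of i] by simp
next
  case (Suc d)
  let ?a = "nx i" and ?b = "(nx ^^ Suc (Suc d)) i"
  have "?b = (nx ^^ Suc d) ?a" by (simp only: funpow_Suc_right o_apply)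
  then have "E ?a j = E ?a ?b + E ?b j" using Suc.IH[of ?a] by simp
  then have "E i j = E i ?a + E ?a ?b + E ?b j" using step[of i] by simp
  then show ?case
    using tidempotent_path_le[of i ?a ?b] tidempotent_path_le[of i ?b j] by linarith
qed

lemma tidempotent_factor_zero_diag: "\<exists>v. E v v = 0 \<and> E i j = E i v + E v j"
proof -
  define nx where "nx = (\<lambda>w. SOME k. E w j = E w k + E k j)"
  have step: "E w j = E w (nx w) + E (nx w) j" for w
    unfolding nx_def using someI_ex[OF tidempotent_path_attained[of w j]] .
  obtain s t where "s < t" and rep: "(nx ^^ s) i = (nx ^^ t) i"
    using nat_map_to_finite_repeats[of "\<lambda>t. (nx ^^ t) i"] by blast
  then obtain d where t: "t = Suc (s + d)" using less_imp_Suc_add by blast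
  define v where "v = (nx ^^ s) i"
  have "(nx ^^ t) i = (nx ^^ Suc d) v"
    unfolding v_def t by (simp only: add.commute[of s] add_Suc[symmetric] funpow_add o_apply)
  then have "(nx ^^ Suc d) v = v"
    unfolding v_def rep[symmetric] by (rule sym)
  then have "E v v = 0"
    using tidempotent_iterate_path[OF step, of v d] by simp
  moreover have "E i j = E i v + E v j"
    using tidempotent_iterate_path[OF step, of i "s + d"] unfolding t[symmetric] v_def rep .
  ultimately show ?thesis by blast
qed

lemma tmult_reindex_through_fixpoints:
  assumes factor: "\<And>i j. \<exists>v. f v = v \<and> E i j = E i v + E v j"
  shows "tmult (\<lambda>i l. E i (f l)) (\<lambda>l j. E (f l) j) = E"
proof (intro ext)
  fix i j
  obtain v where v: "f v = v" "E i j = E i v + E v j" using factor by blast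
  show "tmult (\<lambda>i l. E i (f l)) (\<lambda>l j. E (f l) j) i j = E i j"
  proof (rule tmult_eqI[where l = v])
    show "E i (f k) + E (f k) j \<le> E i j" for k by (rule tidempotent_path_le)
    show "E i (f v) + E (f v) j = E i j" using v by simp
  qed
qed

lemma tidempotent_reindex_green_D:
  assumes factor: "\<And>i j. \<exists>v. f v = v \<and> E i j = E i v + E v j"
  defines "E' \<equiv> \<lambda>i j. E (f i) (f j)"
  shows "tidempotent E' \<and> green_D E E'"
proof -
  define C where "C = (\<lambda>i j. E i (f j))"
  define R where "R = (\<lambda>i j. E (f i) j)"
  have EE: "tmult E E = E" using idem unfolding tidempotent_def .
  have CR: "tmult C R = E"
    unfolding C_def R_def by (rule tmult_reindex_through_fixpoints[OF factor])
  have E'_C: "E' = (\<lambda>i j. C (f i) j)" and E'_R: "E' = (\<lambda>i j. R i (f j))"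
    unfolding E'_def C_def R_def by simp_all
  have EC: "tmult E C = C"
    unfolding C_def tmult_reindex_right[of E "\<lambda>i j. E i j" f] EE ..
  have CE': "tmult C E' = C"
    by (simp only: E'_R tmult_reindex_right CR) (simp add: C_def)
  have RC: "tmult R C = E'"
    by (simp only: R_def tmult_reindex_left[of "\<lambda>i j. E i j" f] EC) (simp add: E'_C)
  have "tmult E' E' = E'"
  proof -
    have "tmult E' E' = tmult (\<lambda>i l. C (f i) l) (\<lambda>l j. R l (f j))"
      by (simp only: E'_C[symmetric] E'_R[symmetric])
    also have "\<dots> = (\<lambda>i j. tmult C R (f i) (f j))"
      by (simp only: tmult_reindex_left tmult_reindex_right)
    also have "\<dots> = E'"
      unfolding CR E'_def ..
    finally show ?thesis .
  qed
  then have "tidempotent E'" unfolding tidempotent_def .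
  moreover have "green_R E C" using green_RI[OF CR[symmetric] EC[symmetric]] .
  moreover have "green_L C E'" using green_LI[OF CE'[symmetric] RC[symmetric]] .
  ultimately show ?thesis unfolding green_D_def by blast
qed

end

theorem theorem6p2:
  fixes E :: "('n::finite) tmat"
  assumes "tidempotent E"
  shows "\<exists>E'. tidempotent E' \<and> green_D E E' \<and> (\<forall>i. E' i i = 0)"
proof -
  obtain v0 where v0: "E v0 v0 = 0"
    using tidempotent_factor_zero_diag[OF assms] by blast
  define f where "f = (\<lambda>x. if E x x = 0 then x else v0)"
  have "\<exists>v. f v = v \<and> E i j = E i v + E v j" for i j
    using tidempotent_factor_zero_diag[OF assms, of i j] unfolding f_def by auto
  then have "tidempotent (\<lambda>i j. E (f i) (f j)) \<and> green_D E (\<lambda>i j. E (f i) (f j))"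
    by (rule tidempotent_reindex_green_D[OF assms])
  moreover have "E (f i) (f i) = 0" for i
    unfolding f_def using v0 by simp
  ultimately show ?thesis by blast
qed

end
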